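(* Let $(B,\sqsubseteq)$ be an ordered functor such that $B$ has a cofree comonad, and let $f,g\colon X\to BX$ be $B$-coalgebras on a common carrier $X$. If $f(x)\sqsubseteq_{BX} g(x)$ for all $x\in X$, then $f^\infty(x)\lesssim_{B^\infty X} g^\infty(x)$ for all $x\in X$.
   Context: An ordered functor $(B,\sqsubseteq)$ is a functor $B\colon\mathsf{Set}\to\mathsf{Set}$ together with a preorder $\sqsubseteq_{BX}$ on $BX$ for every set $X$, such that $Bf\colon BX\to BY$ is monotone for every function $f\colon X\to Y$. For a relation $R\subseteq X\times Y$ with projections $\pi_1,\pi_2$, $\mathsf{Rel}(B)(R)=\{(b,c)\in BX\times BY\mid \exists d\in BR.\ B\pi_1(d)=b,\ B\pi_2(d)=c\}$ and $\mathsf{Rel}_{\sqsubseteq}(B)(R)=\{(b,c)\mid \exists b',c'.\ b\sqsubseteq_{BX}b',\ (b',c')\in\mathsf{Rel}(B)(R),\ c'\sqsubseteq_{BY}c\}$. Given coalgebras $f\colon X\to BX$, $g\colon Y\to BY$, a relation $R\subseteq X\times Y$ is a simulation if $(f(x),g(y))\in\mathsf{Rel}_{\sqsubseteq}(B)(R)$ for all $(x,y)\in R$; similarity is the greatest simulation. Cofree comonad: for each set $X$ there is a set $B^\infty X$ with maps $\theta_X\colon B^\infty X\to BB^\infty X$ and $\epsilon_X\colon B^\infty X\to X$ such that $\langle\theta_X,\epsilon_X\rangle$ is a final coalgebra for the functor $B(-)\times X$. For a coalgebra $f\colon X\to BX$, its coinductive extension $f^\infty\colon X\to B^\infty X$ is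 the unique $B(-)\times X$-coalgebra morphism from $\langle f,\mathrm{id}_X\rangle$ to $\langle\theta_X,\epsilon_X\rangle$. The functor $B(-)\times X$ is ordered by $(b,x)\,\widetilde{\sqsubseteq}\,(c,y)$ iff $b\sqsubseteq c$ (in $BW$) and $x=y$; $\lesssim_{B^\infty X}$ denotes the similarity of the coalgebra $\langle\theta_X,\epsilon_X\rangle$ with itself with respect to the ordered functor $(B(-)\times X,\widetilde{\sqsubseteq})$. *)

theory Defs
  imports "HOL-Library.FuncSet"
begin

text \<open>
  Sets are subsets of a universe type 'u
  (assumed infinite in the theorem).  A functor is given by an object part
  Fobj :: 'u set => 'v set and a morphism part Fmap X Y f (the image of the
  function f : X -> Y).  For B itself 'v = 'u; for B(-) x X we use 'v = 'u x 'u.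
\<close>

definition is_functor ::
  "('u set \<Rightarrow> 'v set) \<Rightarrow> ('u set \<Rightarrow> 'u set \<Rightarrow> ('u \<Rightarrow> 'u) \<Rightarrow> 'v \<Rightarrow> 'v) \<Rightarrow> bool" where
  "is_functor Fobj Fmap \<longleftrightarrow>
     (\<forall>X Y f. f \<in> X \<rightarrow> Y \<longrightarrow> Fmap X Y f \<in> Fobj X \<rightarrow> Fobj Y) \<and>
     (\<forall>X Y f g. f \<in> X \<rightarrow> Y \<and> (\<forall>x\<in>X. f x = g x) \<longrightarrow> (\<forall>b\<in>Fobj X. Fmap X Y f b = Fmap X Y g b)) \<and>
     (\<forall>X. \<forall>b\<in>Fobj X. Fmap X X id b = b) \<and>
     (\<forall>X Y Z f g. f \<in> X \<rightarrow> Y \<and> g \<in> Y \<rightarrow> Z \<longrightarrow>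
        (\<forall>b\<in>Fobj X. Fmap Y Z g (Fmap X Y f b) = Fmap X Z (g \<circ> f) b))"

definition is_ordered_functor ::
  "('u set \<Rightarrow> 'v set) \<Rightarrow> ('u set \<Rightarrow> 'u set \<Rightarrow> ('u \<Rightarrow> 'u) \<Rightarrow> 'v \<Rightarrow> 'v)
    \<Rightarrow> ('u set \<Rightarrow> 'v \<Rightarrow> 'v \<Rightarrow> bool) \<Rightarrow> bool" where
  "is_ordered_functor Fobj Fmap le \<longleftrightarrow>
     is_functor Fobj Fmap \<and>
     (\<forall>X b c. le X b c \<longrightarrow> b \<in> Fobj X \<and> c \<in> Fobj X) \<and>
     (\<forall>X. \<forall>b\<in>Fobj X. le X b b) \<and>
     (\<forall>X b c d. le X b c \<and> le X c d \<longrightarrow> le X b d) \<and>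
     (\<forall>X Y f. f \<in> X \<rightarrow> Y \<longrightarrow> (\<forall>b c. le X b c \<longrightarrow> le Y (Fmap X Y f b) (Fmap X Y f c)))"

text \<open>Rel(B)(R) for R \<subseteq> X \<times> Y: B is applied to (a copy Z in the universe of) the
  set R, with projections p1, p2.\<close>
definition RelF ::
  "('u set \<Rightarrow> 'v set) \<Rightarrow> ('u set \<Rightarrow> 'u set \<Rightarrow> ('u \<Rightarrow> 'u) \<Rightarrow> 'v \<Rightarrow> 'v)
    \<Rightarrow> 'u set \<Rightarrow> 'u set \<Rightarrow> ('u \<times> 'u) set \<Rightarrow> 'v \<Rightarrow> 'v \<Rightarrow> bool" where
  "RelF Fobj Fmap X Y R b c \<longleftrightarrow>
     (\<exists>Z p1 p2 d. p1 \<in> Z \<rightarrow> X \<and> p2 \<in> Z \<rightarrow> Y \<and> bij_betw (\<lambda>z. (p1 z, p2 z)) Z R \<and>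
        d \<in> Fobj Z \<and> Fmap Z X p1 d = b \<and> Fmap Z Y p2 d = c)"

definition RelF_le ::
  "('u set \<Rightarrow> 'v set) \<Rightarrow> ('u set \<Rightarrow> 'u set \<Rightarrow> ('u \<Rightarrow> 'u) \<Rightarrow> 'v \<Rightarrow> 'v)
    \<Rightarrow> ('u set \<Rightarrow> 'v \<Rightarrow> 'v \<Rightarrow> bool)
    \<Rightarrow> 'u set \<Rightarrow> 'u set \<Rightarrow> ('u \<times> 'u) set \<Rightarrow> 'v \<Rightarrow> 'v \<Rightarrow> bool" where
  "RelF_le Fobj Fmap le X Y R b c \<longleftrightarrow>
     b \<in> Fobj X \<and> c \<in> Fobj Y \<and>
     (\<exists>b' c'. le X b b' \<and> RelF Fobj Fmap X Y R b' c' \<and> le Y c' c)"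

definition simulation ::
  "('u set \<Rightarrow> 'v set) \<Rightarrow> ('u set \<Rightarrow> 'u set \<Rightarrow> ('u \<Rightarrow> 'u) \<Rightarrow> 'v \<Rightarrow> 'v)
    \<Rightarrow> ('u set \<Rightarrow> 'v \<Rightarrow> 'v \<Rightarrow> bool)
    \<Rightarrow> 'u set \<Rightarrow> ('u \<Rightarrow> 'v) \<Rightarrow> 'u set \<Rightarrow> ('u \<Rightarrow> 'v) \<Rightarrow> ('u \<times> 'u) set \<Rightarrow> bool" where
  "simulation Fobj Fmap le X f Y g R \<longleftrightarrow>
     R \<subseteq> X \<times> Y \<and> (\<forall>(x, y)\<in>R. RelF_le Fobj Fmap le X Y R (f x) (g y))"

definition similarity ::
  "('u set \<Rightarrow> 'v set) \<Rightarrow> ('u set \<Rightarrow> 'u set \<Rightarrow> ('u \<Rightarrow> 'u) \<Rightarrow> 'v \<Rightarrow> 'v)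
    \<Rightarrow> ('u set \<Rightarrow> 'v \<Rightarrow> 'v \<Rightarrow> bool)
    \<Rightarrow> 'u set \<Rightarrow> ('u \<Rightarrow> 'v) \<Rightarrow> 'u set \<Rightarrow> ('u \<Rightarrow> 'v) \<Rightarrow> ('u \<times> 'u) set" where
  "similarity Fobj Fmap le X f Y g = \<Union>{R. simulation Fobj Fmap le X f Y g R}"

definition coalg_morphism ::
  "('u set \<Rightarrow> 'v set) \<Rightarrow> ('u set \<Rightarrow> 'u set \<Rightarrow> ('u \<Rightarrow> 'u) \<Rightarrow> 'v \<Rightarrow> 'v)
    \<Rightarrow> 'u set \<Rightarrow> ('u \<Rightarrow> 'v) \<Rightarrow> 'u set \<Rightarrow> ('u \<Rightarrow> 'v) \<Rightarrow> ('u \<Rightarrow> 'u) \<Rightarrow> bool" where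
  "coalg_morphism Fobj Fmap W h C c u \<longleftrightarrow>
     u \<in> W \<rightarrow> C \<and> (\<forall>w\<in>W. c (u w) = Fmap W C u (h w))"

definition final_coalgebra ::
  "('u set \<Rightarrow> 'v set) \<Rightarrow> ('u set \<Rightarrow> 'u set \<Rightarrow> ('u \<Rightarrow> 'u) \<Rightarrow> 'v \<Rightarrow> 'v)
    \<Rightarrow> 'u set \<Rightarrow> ('u \<Rightarrow> 'v) \<Rightarrow> bool" where
  "final_coalgebra Fobj Fmap C c \<longleftrightarrow>
     c \<in> C \<rightarrow> Fobj C \<and>
     (\<forall>W h. h \<in> W \<rightarrow> Fobj W \<longrightarrow>
        (\<exists>u. coalg_morphism Fobj Fmap W h C c u) \<and>
        (\<forall>u u'. coalg_morphism Fobj Fmap W h C c u \<and> coalg_morphism Fobj Fmap W h C c u'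
                 \<longrightarrow> (\<forall>w\<in>W. u w = u' w)))"

definition prodobj :: "('u set \<Rightarrow> 'u set) \<Rightarrow> 'u set \<Rightarrow> 'u set \<Rightarrow> ('u \<times> 'u) set" where
  "prodobj Fobj X W = Fobj W \<times> X"

definition prodmap :: "('u set \<Rightarrow> 'u set \<Rightarrow> ('u \<Rightarrow> 'u) \<Rightarrow> 'u \<Rightarrow> 'u)
    \<Rightarrow> 'u set \<Rightarrow> 'u set \<Rightarrow> ('u \<Rightarrow> 'u) \<Rightarrow> 'u \<times> 'u \<Rightarrow> 'u \<times> 'u" where
  "prodmap Fmap W V u p = (Fmap W V u (fst p), snd p)"

definition prodle :: "('u set \<Rightarrow> 'u \<Rightarrow> 'u \<Rightarrow> bool) \<Rightarrow> 'u set \<Rightarrow> 'u \<times> 'u \<Rightarrow> 'u \<times> 'u \<Rightarrow> bool" where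
  "prodle le W p q \<longleftrightarrow> le W (fst p) (fst q) \<and> snd p = snd q"

text \<open>Cofree comonad at X: (Binf, \<langle>theta, eps\<rangle>) is a final B(-)\<times>X coalgebra.\<close>
definition cofree_at ::
  "('u set \<Rightarrow> 'u set) \<Rightarrow> ('u set \<Rightarrow> 'u set \<Rightarrow> ('u \<Rightarrow> 'u) \<Rightarrow> 'u \<Rightarrow> 'u)
    \<Rightarrow> 'u set \<Rightarrow> 'u set \<Rightarrow> ('u \<Rightarrow> 'u) \<Rightarrow> ('u \<Rightarrow> 'u) \<Rightarrow> bool" where
  "cofree_at Fobj Fmap X Binf theta eps \<longleftrightarrow>
     final_coalgebra (prodobj Fobj X) (prodmap Fmap) Binf (\<lambda>t. (theta t, eps t))"

definition coinductive_ext ::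
  "('u set \<Rightarrow> 'u set) \<Rightarrow> ('u set \<Rightarrow> 'u set \<Rightarrow> ('u \<Rightarrow> 'u) \<Rightarrow> 'u \<Rightarrow> 'u)
    \<Rightarrow> 'u set \<Rightarrow> 'u set \<Rightarrow> ('u \<Rightarrow> 'u) \<Rightarrow> ('u \<Rightarrow> 'u) \<Rightarrow> ('u \<Rightarrow> 'u) \<Rightarrow> ('u \<Rightarrow> 'u) \<Rightarrow> bool" where
  "coinductive_ext Fobj Fmap X Binf theta eps f u \<longleftrightarrow>
     coalg_morphism (prodobj Fobj X) (prodmap Fmap) X (\<lambda>x. (f x, x)) Binf (\<lambda>t. (theta t, eps t)) u"

end

theory Submission
  imports Defs
begin

text \<open>
  Both coinductive extensions are coalgebra morphisms from X into the final coalgebra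
  B^\<infinity>X. For any two morphisms u, v from coalgebras h, k on the same carrier with h \<sqsubseteq> k
  pointwise, the image R of x \<mapsto> (u x, v x) is a simulation: B(u)(h x) is related by
  Rel(B)(R) to B(v)(h x), the witness being h x pushed into a copy of R, and monotonicity
  gives B(v)(h x) \<sqsubseteq> B(v)(k x). Applied to the coalgebras (f x, x) and (g x, x) for
  B(-) \<times> X, this places every pair (f^\<infinity> x, g^\<infinity> x) inside similarity.
\<close>

lemma is_functorD:
  assumes "is_functor Fobj Fmap"
  shows is_functor_map_in: "u \<in> W \<rightarrow> V \<Longrightarrow> b \<in> Fobj W \<Longrightarrow> Fmap W V u b \<in> Fobj V"
    and is_functor_map_cong:
      "u \<in> W \<rightarrow> V \<Longrightarrow> (\<And>w. w \<in> W \<Longrightarrow> u w = u' w) \<Longrightarrow> b \<in> Fobj W \<Longrightarrow> Fmap W V u b = Fmap W V u' b"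
    and is_functor_map_id: "b \<in> Fobj W \<Longrightarrow> Fmap W W id b = b"
    and is_functor_map_comp:
      "u \<in> W \<rightarrow> V \<Longrightarrow> v \<in> V \<rightarrow> U \<Longrightarrow> b \<in> Fobj W \<Longrightarrow> Fmap V U v (Fmap W V u b) = Fmap W U (v \<circ> u) b"
proof -
  note D = assms[unfolded is_functor_def]
  show "u \<in> W \<rightarrow> V \<Longrightarrow> b \<in> Fobj W \<Longrightarrow> Fmap W V u b \<in> Fobj V"
    using D[THEN conjunct1, rule_format, of u W V] by blast
  show "u \<in> W \<rightarrow> V \<Longrightarrow> (\<And>w. w \<in> W \<Longrightarrow> u w = u' w) \<Longrightarrow> b \<in> Fobj W \<Longrightarrow> Fmap W V u b = Fmap W V u' b"
    using D[THEN conjunct2, THEN conjunct1, rule_format, of u W V u' b] by blast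
  show "b \<in> Fobj W \<Longrightarrow> Fmap W W id b = b"
    using D[THEN conjunct2, THEN conjunct2, THEN conjunct1, rule_format, of b W] by blast
  show "u \<in> W \<rightarrow> V \<Longrightarrow> v \<in> V \<rightarrow> U \<Longrightarrow> b \<in> Fobj W \<Longrightarrow> Fmap V U v (Fmap W V u b) = Fmap W U (v \<circ> u) b"
    using D[THEN conjunct2, THEN conjunct2, THEN conjunct2, rule_format, of u W V v U b] by blast
qed

lemma is_ordered_functorD:
  assumes "is_ordered_functor Fobj Fmap le"
  shows is_ordered_functor_functor: "is_functor Fobj Fmap"
    and is_ordered_functor_refl: "b \<in> Fobj W \<Longrightarrow> le W b b"
    and is_ordered_functor_mono:
      "u \<in> W \<rightarrow> V \<Longrightarrow> le W b b' \<Longrightarrow> le V (Fmap W V u b) (Fmap W V u b')"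
proof -
  note D = assms[unfolded is_ordered_functor_def]
  show "is_functor Fobj Fmap"
    using D by (rule conjunct1)
  show "b \<in> Fobj W \<Longrightarrow> le W b b"
    using D[THEN conjunct2, THEN conjunct2, THEN conjunct1, rule_format, of b W] by blast
  show "u \<in> W \<rightarrow> V \<Longrightarrow> le W b b' \<Longrightarrow> le V (Fmap W V u b) (Fmap W V u b')"
    using D[THEN conjunct2, THEN conjunct2, THEN conjunct2, THEN conjunct2, rule_format, of u W V b b']
    by blast
qed

lemma is_functor_prodobj:
  fixes Bobj :: "'u set \<Rightarrow> 'u set"
  assumes B: "is_functor Bobj Bmap"
  shows "is_functor (prodobj Bobj X) (prodmap Bmap)"
  unfolding is_functor_def
proof (intro conjI allI impI ballI Pi_I)
  fix W V :: "'u set" and u p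
  assume "u \<in> W \<rightarrow> V" "p \<in> prodobj Bobj X W"
  with is_functor_map_in[OF B] show "prodmap Bmap W V u p \<in> prodobj Bobj X V"
    unfolding prodobj_def prodmap_def by (cases p) auto
next
  fix W V :: "'u set" and u u' p
  assume "u \<in> W \<rightarrow> V \<and> (\<forall>w\<in>W. u w = u' w)" "p \<in> prodobj Bobj X W"
  with is_functor_map_cong[OF B, of u W V u' "fst p"]
  show "prodmap Bmap W V u p = prodmap Bmap W V u' p"
    unfolding prodobj_def prodmap_def by (cases p) auto
next
  fix W :: "'u set" and p
  assume "p \<in> prodobj Bobj X W"
  with is_functor_map_id[OF B] show "prodmap Bmap W W id p = p"
    unfolding prodobj_def prodmap_def by (cases p) auto
next
  fix W V U :: "'u set" and u v p
  assume "u \<in> W \<rightarrow> V \<and> v \<in> V \<rightarrow> U" "p \<in> prodobj Bobj X W"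
  with is_functor_map_comp[OF B, of u W V v U "fst p"]
  show "prodmap Bmap V U v (prodmap Bmap W V u p) = prodmap Bmap W U (v \<circ> u) p"
    unfolding prodobj_def prodmap_def by (cases p) auto
qed

lemma RelF_image_pair:
  assumes F: "is_functor Fobj Fmap"
    and u: "u \<in> W \<rightarrow> X" and v: "v \<in> W \<rightarrow> Y" and b: "b \<in> Fobj W"
  shows "RelF Fobj Fmap X Y ((\<lambda>w. (u w, v w)) ` W) (Fmap W X u b) (Fmap W Y v b)"
proof -
  define p where "p = (\<lambda>w. (u w, v w))"
  define s where "s = inv_into W p"
  define Z where "Z = s ` p ` W"
  define q where "q = s \<circ> p"
  have ZW: "Z \<subseteq> W"
    unfolding Z_def s_def by (auto intro: inv_into_into)
  have q: "q \<in> W \<rightarrow> Z"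
    unfolding q_def Z_def by auto
  have pq: "u (q w) = u w \<and> v (q w) = v w" if "w \<in> W" for w
  proof -
    have "p (q w) = p w"
      using that f_inv_into_f[of "p w" p W] unfolding q_def s_def by simp
    then show ?thesis
      unfolding p_def by simp
  qed
  have bij: "bij_betw p Z (p ` W)"
  proof (rule bij_betw_byWitness[where f' = s])
    show "\<forall>z\<in>Z. s (p z) = z"
      unfolding Z_def s_def by (auto simp: f_inv_into_f)
    show "\<forall>r\<in>p ` W. p (s r) = r"
      unfolding s_def by (auto simp: f_inv_into_f)
    show "p ` Z \<subseteq> p ` W"
      using ZW by blast
    show "s ` p ` W \<subseteq> Z"
      unfolding Z_def ..
  qed
  have uZ: "u \<in> Z \<rightarrow> X" and vZ: "v \<in> Z \<rightarrow> Y"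
    using u v ZW by auto
  have "Fmap Z X u (Fmap W Z q b) = Fmap W X (u \<circ> q) b"
    using is_functor_map_comp[OF F q uZ b] .
  also have "\<dots> = Fmap W X u b"
    using q u uZ pq by (intro is_functor_map_cong[OF F _ _ b]) auto
  finally have dX: "Fmap Z X u (Fmap W Z q b) = Fmap W X u b" .
  have "Fmap Z Y v (Fmap W Z q b) = Fmap W Y (v \<circ> q) b"
    using is_functor_map_comp[OF F q vZ b] .
  also have "\<dots> = Fmap W Y v b"
    using q v vZ pq by (intro is_functor_map_cong[OF F _ _ b]) auto
  finally have dY: "Fmap Z Y v (Fmap W Z q b) = Fmap W Y v b" .
  show ?thesis
    unfolding RelF_def
    by (rule exI[of _ Z], rule exI[of _ u], rule exI[of _ v], rule exI[of _ "Fmap W Z q b"])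
      (use uZ vZ bij dX dY is_functor_map_in[OF F q b] in \<open>simp add: p_def\<close>)
qed

lemma coalg_morphism_pair_image_simulation:
  assumes F: "is_functor Fobj Fmap"
    and refl: "\<And>b. b \<in> Fobj C \<Longrightarrow> le C b b"
    and mono: "\<And>b b'. le X b b' \<Longrightarrow> le C (Fmap X C v b) (Fmap X C v b')"
    and c: "c \<in> C \<rightarrow> Fobj C" and h: "h \<in> X \<rightarrow> Fobj X"
    and u: "coalg_morphism Fobj Fmap X h C c u"
    and v: "coalg_morphism Fobj Fmap X k C c v"
    and hk: "\<And>x. x \<in> X \<Longrightarrow> le X (h x) (k x)"
  shows "simulation Fobj Fmap le C c C c ((\<lambda>x. (u x, v x)) ` X)"
proof -
  have uC: "u \<in> X \<rightarrow> C" and vC: "v \<in> X \<rightarrow> C"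
    using u v unfolding coalg_morphism_def by auto
  have "RelF_le Fobj Fmap le C C ((\<lambda>x. (u x, v x)) ` X) (c (u x)) (c (v x))" if x: "x \<in> X" for x
  proof -
    have cu: "c (u x) = Fmap X C u (h x)" and cv: "c (v x) = Fmap X C v (k x)"
      using u v x unfolding coalg_morphism_def by auto
    have "RelF Fobj Fmap C C ((\<lambda>x. (u x, v x)) ` X) (c (u x)) (Fmap X C v (h x))"
      unfolding cu using RelF_image_pair[OF F uC vC] h x by auto
    moreover have "le C (Fmap X C v (h x)) (c (v x))"
      unfolding cv using mono hk x by blast
    moreover have "c (u x) \<in> Fobj C" "c (v x) \<in> Fobj C"
      using c uC vC x by auto
    ultimately show ?thesis
      unfolding RelF_le_def using refl
      by (intro conjI exI[of _ "c (u x)"] exI[of _ "Fmap X C v (h x)"]) simp_all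
  qed
  then show ?thesis
    unfolding simulation_def using uC vC by auto
qed

lemma simulation_subset_similarity:
  "simulation Fobj Fmap le X f Y g R \<Longrightarrow> R \<subseteq> similarity Fobj Fmap le X f Y g"
  unfolding similarity_def by blast

theorem mainTheorem3:
  fixes Bobj :: "'u set \<Rightarrow> 'u set"
    and Bmap :: "'u set \<Rightarrow> 'u set \<Rightarrow> ('u \<Rightarrow> 'u) \<Rightarrow> 'u \<Rightarrow> 'u"
    and le :: "'u set \<Rightarrow> 'u \<Rightarrow> 'u \<Rightarrow> bool"
    and X Binf :: "'u set"
    and theta eps f g finf ginf :: "'u \<Rightarrow> 'u"
  assumes "infinite (UNIV :: 'u set)"
    and "is_ordered_functor Bobj Bmap le"
    and "cofree_at Bobj Bmap X Binf theta eps"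
    and "f \<in> X \<rightarrow> Bobj X" and "g \<in> X \<rightarrow> Bobj X"
    and "\<forall>x\<in>X. le X (f x) (g x)"
    and "coinductive_ext Bobj Bmap X Binf theta eps f finf"
    and "coinductive_ext Bobj Bmap X Binf theta eps g ginf"
  shows "\<forall>x\<in>X. (finf x, ginf x) \<in>
           similarity (prodobj Bobj X) (prodmap Bmap) (prodle le)
             Binf (\<lambda>t. (theta t, eps t)) Binf (\<lambda>t. (theta t, eps t))"
proof -
  have B: "is_functor Bobj Bmap"
    using assms(2) by (rule is_ordered_functor_functor)
  have coalg: "(\<lambda>t. (theta t, eps t)) \<in> Binf \<rightarrow> prodobj Bobj X Binf"
    using assms(3) unfolding cofree_at_def final_coalgebra_def by (rule conjunct1)
  have ginf: "ginf \<in> X \<rightarrow> Binf"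
    using assms(8) unfolding coinductive_ext_def coalg_morphism_def by (rule conjunct1)
  have "simulation (prodobj Bobj X) (prodmap Bmap) (prodle le)
          Binf (\<lambda>t. (theta t, eps t)) Binf (\<lambda>t. (theta t, eps t)) ((\<lambda>x. (finf x, ginf x)) ` X)"
  proof (rule coalg_morphism_pair_image_simulation[OF is_functor_prodobj[OF B] _ _ coalg _
        assms(7,8)[unfolded coinductive_ext_def]])
    show "prodle le Binf p p" if "p \<in> prodobj Bobj X Binf" for p
      using that is_ordered_functor_refl[OF assms(2)] by (auto simp: prodobj_def prodle_def)
    show "prodle le Binf (prodmap Bmap X Binf ginf p) (prodmap Bmap X Binf ginf q)"
      if "prodle le X p q" for p q
      using that is_ordered_functor_mono[OF assms(2) ginf] by (simp add: prodle_def prodmap_def)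
    show "(\<lambda>x. (f x, x)) \<in> X \<rightarrow> prodobj Bobj X X"
      using assms(4) by (auto simp: prodobj_def)
    show "prodle le X (f x, x) (g x, x)" if "x \<in> X" for x
      using that assms(6) by (simp add: prodle_def)
  qed
  then show ?thesis
    using simulation_subset_similarity by blast
qed

end
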